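(* Let $C_{12},C_{13},C_{23}$ be compatible bivariate copulas, let $C_{ji}(u,v):=C_{ij}(v,u)$ for $1\le i<j\le 3$, and let $\mathcal P=\{(1,2,3),(1,3,2),(2,1,3)\}$. Then for every $3$-copula $\widetilde C$ with $\widetilde C(u_1,u_2,1)=C_{12}(u_1,u_2)$, $\widetilde C(u_1,1,u_3)=C_{13}(u_1,u_3)$, $\widetilde C(1,u_2,u_3)=C_{23}(u_2,u_3)$, and all $u_1,u_2,u_3\in[0,1]$, \[ C_L(u_1,u_2,u_3)\le\widetilde C(u_1,u_2,u_3)\le C_U(u_1,u_2,u_3), \] where \[ C_L(u_1,u_2,u_3)=\max_{(i,j,k)\in\mathcal P}\max\Big\{(C_{ij}\star_{W_2}C_{jk})(u_i,u_j,u_k),\ (C_{ij}\star_{M_2}C_{jk})(u_i,u_j,u_k)+C_{ik}(u_i,u_k)-(C_{ij}\ast_{M_2}C_{jk})(u_i,u_k)\Big\}, \] \[ C_U(u_1,u_2,u_3)=\min_{(i,j,k)\in\mathcal P}\min\Big\{(C_{ij}\star_{M_2}C_{jk})(u_i,u_j,u_k),\ (C_{ij}\star_{W_2}C_{jk})(u_i,u_j,u_k)+C_{ik}(u_i,u_k)-(C_{ij}\ast_{W_2}C_{jk})(u_i,u_k)\Big\}. \]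
   Context: A bivariate copula is a distribution function on $[0,1]^2$ with uniform $[0,1]$ marginals; a $3$-copula is a distribution function on $[0,1]^3$ with uniform $[0,1]$ one-dimensional marginals. Bivariate copulas are compatible if they are the bivariate marginals (in the sense stated in the claim) of some $3$-copula. $W_2(u,v)=\max\{u+v-1,0\}$, $M_2(u,v)=\min\{u,v\}$. For bivariate copulas $A,B$ and a bivariate copula $C$: $(A\ast_{C} B)(x,z)=\int_{0}^{1} C\!\left(\tfrac{\partial}{\partial t} A(x,t),\tfrac{\partial}{\partial t} B(t,z)\right) dt$ and $(A\star_{C} B)(x,y,z)=\int_{0}^{y} C\!\left(\tfrac{\partial}{\partial t} A(x,t),\tfrac{\partial}{\partial t} B(t,z)\right) dt$, the partial derivatives existing for almost every $t$. *)

theory Defs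
  imports "HOL-Analysis.Analysis"
begin

definition copula2 :: "(real \<Rightarrow> real \<Rightarrow> real) \<Rightarrow> bool" where
  "copula2 C \<longleftrightarrow>
     (\<forall>u\<in>{0..1}. C u 0 = 0 \<and> C 0 u = 0 \<and> C u 1 = u \<and> C 1 u = u) \<and>
     (\<forall>u1 u2 v1 v2. u1 \<in> {0..1} \<longrightarrow> u2 \<in> {0..1} \<longrightarrow> v1 \<in> {0..1} \<longrightarrow> v2 \<in> {0..1} \<longrightarrow>
        u1 \<le> u2 \<longrightarrow> v1 \<le> v2 \<longrightarrow> C u2 v2 - C u2 v1 - C u1 v2 + C u1 v1 \<ge> 0)"

definition copula3 :: "(real \<Rightarrow> real \<Rightarrow> real \<Rightarrow> real) \<Rightarrow> bool" where
  "copula3 C \<longleftrightarrow>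
     (\<forall>u\<in>{0..1}. \<forall>v\<in>{0..1}. C 0 u v = 0 \<and> C u 0 v = 0 \<and> C u v 0 = 0) \<and>
     (\<forall>u\<in>{0..1}. C u 1 1 = u \<and> C 1 u 1 = u \<and> C 1 1 u = u) \<and>
     (\<forall>a1 b1 a2 b2 a3 b3.
        a1 \<in> {0..1} \<longrightarrow> b1 \<in> {0..1} \<longrightarrow> a2 \<in> {0..1} \<longrightarrow> b2 \<in> {0..1} \<longrightarrow>
        a3 \<in> {0..1} \<longrightarrow> b3 \<in> {0..1} \<longrightarrow> a1 \<le> b1 \<longrightarrow> a2 \<le> b2 \<longrightarrow> a3 \<le> b3 \<longrightarrow>
        C b1 b2 b3 - C a1 b2 b3 - C b1 a2 b3 - C b1 b2 a3
          + C a1 a2 b3 + C a1 b2 a3 + C b1 a2 a3 - C a1 a2 a3 \<ge> 0)"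

definition has_marginals ::
  "(real \<Rightarrow> real \<Rightarrow> real \<Rightarrow> real) \<Rightarrow> (real \<Rightarrow> real \<Rightarrow> real) \<Rightarrow> (real \<Rightarrow> real \<Rightarrow> real)
     \<Rightarrow> (real \<Rightarrow> real \<Rightarrow> real) \<Rightarrow> bool" where
  "has_marginals C C12 C13 C23 \<longleftrightarrow>
     (\<forall>u1\<in>{0..1}. \<forall>u2\<in>{0..1}. \<forall>u3\<in>{0..1}.
        C u1 u2 1 = C12 u1 u2 \<and> C u1 1 u3 = C13 u1 u3 \<and> C 1 u2 u3 = C23 u2 u3)"

definition compatible ::
  "(real \<Rightarrow> real \<Rightarrow> real) \<Rightarrow> (real \<Rightarrow> real \<Rightarrow> real) \<Rightarrow> (real \<Rightarrow> real \<Rightarrow> real) \<Rightarrow> bool" where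
  "compatible C12 C13 C23 \<longleftrightarrow> (\<exists>C. copula3 C \<and> has_marginals C C12 C13 C23)"

definition W2 :: "real \<Rightarrow> real \<Rightarrow> real" where "W2 u v = max (u + v - 1) 0"
definition M2 :: "real \<Rightarrow> real \<Rightarrow> real" where "M2 u v = min u v"

text \<open>The star product: integral over [0,y] of C applied to the partial derivatives
  (which exist almost everywhere for copulas; Henstock-Kurzweil integral, insensitive to null sets).\<close>
definition star3 ::
  "(real \<Rightarrow> real \<Rightarrow> real) \<Rightarrow> (real \<Rightarrow> real \<Rightarrow> real) \<Rightarrow> (real \<Rightarrow> real \<Rightarrow> real)
     \<Rightarrow> real \<Rightarrow> real \<Rightarrow> real \<Rightarrow> real" where
  "star3 C A B x y z = integral {0..y} (\<lambda>t. C (deriv (\<lambda>s. A x s) t) (deriv (\<lambda>s. B s z) t))"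

definition ast2 ::
  "(real \<Rightarrow> real \<Rightarrow> real) \<Rightarrow> (real \<Rightarrow> real \<Rightarrow> real) \<Rightarrow> (real \<Rightarrow> real \<Rightarrow> real)
     \<Rightarrow> real \<Rightarrow> real \<Rightarrow> real" where
  "ast2 C A B x z = integral {0..1} (\<lambda>t. C (deriv (\<lambda>s. A x s) t) (deriv (\<lambda>s. B s z) t))"

definition Cpair ::
  "(real \<Rightarrow> real \<Rightarrow> real) \<Rightarrow> (real \<Rightarrow> real \<Rightarrow> real) \<Rightarrow> (real \<Rightarrow> real \<Rightarrow> real)
     \<Rightarrow> nat \<Rightarrow> nat \<Rightarrow> real \<Rightarrow> real \<Rightarrow> real" where
  "Cpair C12 C13 C23 i j =
     (if (i, j) = (1, 2) then C12
      else if (i, j) = (1, 3) then C13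
      else if (i, j) = (2, 3) then C23
      else if (i, j) = (2, 1) then (\<lambda>u v. C12 v u)
      else if (i, j) = (3, 1) then (\<lambda>u v. C13 v u)
      else (\<lambda>u v. C23 v u))"

definition sel3 :: "real \<Rightarrow> real \<Rightarrow> real \<Rightarrow> nat \<Rightarrow> real" where
  "sel3 u1 u2 u3 i = (if i = 1 then u1 else if i = 2 then u2 else u3)"

definition Perms :: "(nat \<times> nat \<times> nat) set" where
  "Perms = {(1, 2, 3), (1, 3, 2), (2, 1, 3)}"

definition CL ::
  "(real \<Rightarrow> real \<Rightarrow> real) \<Rightarrow> (real \<Rightarrow> real \<Rightarrow> real) \<Rightarrow> (real \<Rightarrow> real \<Rightarrow> real)
     \<Rightarrow> real \<Rightarrow> real \<Rightarrow> real \<Rightarrow> real" where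
  "CL C12 C13 C23 u1 u2 u3 =
     Max ((\<lambda>(i, j, k).
        let Cij = Cpair C12 C13 C23 i j; Cjk = Cpair C12 C13 C23 j k; Cik = Cpair C12 C13 C23 i k;
            ui = sel3 u1 u2 u3 i; uj = sel3 u1 u2 u3 j; uk = sel3 u1 u2 u3 k
        in max (star3 W2 Cij Cjk ui uj uk)
               (star3 M2 Cij Cjk ui uj uk + Cik ui uk - ast2 M2 Cij Cjk ui uk)) ` Perms)"

definition CU ::
  "(real \<Rightarrow> real \<Rightarrow> real) \<Rightarrow> (real \<Rightarrow> real \<Rightarrow> real) \<Rightarrow> (real \<Rightarrow> real \<Rightarrow> real)
     \<Rightarrow> real \<Rightarrow> real \<Rightarrow> real \<Rightarrow> real" where
  "CU C12 C13 C23 u1 u2 u3 =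
     Min ((\<lambda>(i, j, k).
        let Cij = Cpair C12 C13 C23 i j; Cjk = Cpair C12 C13 C23 j k; Cik = Cpair C12 C13 C23 i k;
            ui = sel3 u1 u2 u3 i; uj = sel3 u1 u2 u3 j; uk = sel3 u1 u2 u3 k
        in min (star3 M2 Cij Cjk ui uj uk)
               (star3 W2 Cij Cjk ui uj uk + Cik ui uk - ast2 W2 Cij Cjk ui uk)) ` Perms)"

end

(*
  Fix a 3-copula D and x, z in [0,1]. The sections alpha(t) = D(x,t,1), beta(t) = D(1,t,z) and
  g(t) = D(x,t,z) are nondecreasing and 1-Lipschitz, and the 3-increasing property on the boxes
  [0,x] x [s,t] x [0,z], [0,x] x [s,t] x [z,1], [x,1] x [s,t] x [0,z], [x,1] x [s,t] x [z,1] shows that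
  their increments over [s,t] satisfy the Frechet-Hoeffding bounds
    max (Da + Db - (t - s)) 0 <= Dg <= min Da Db.
  A monotone 1-Lipschitz function is differentiable almost everywhere (by the Vitali covering
  theorem) and is the integral of its derivative. Hence W2(alpha', beta') <= g'
  <= M2(alpha', beta') almost everywhere, and integrating over [0,y] and over [y,1] gives the two
  lower and the two upper bounds for D(x,y,z). Applying this to the given 3-copula with its
  arguments permuted according to the three elements of P yields C_L and C_U.
*)

theory Submission
  imports Defs
begin

lemma frequently_at_0_in_sets_borel:
  fixes P :: "'a::topological_space \<Rightarrow> real \<Rightarrow> bool"
  assumes "\<And>h. open {x. P x h}"
  shows "{x. \<exists>\<^sub>F h in at 0. P x h} \<in> sets borel"
proof -
  have freq_iff: "(\<exists>\<^sub>F h in at 0. P x h) \<longleftrightarrow> (\<forall>d>0. \<exists>h. h \<noteq> 0 \<and> \<bar>h\<bar> < d \<and> P x h)" for x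
    by (simp add: frequently_at dist_real_def)
  have "{x. \<exists>\<^sub>F h in at 0. P x h} = (\<Inter>n. \<Union>h \<in> {h. h \<noteq> 0 \<and> \<bar>h\<bar> < inverse (Suc n)}. {x. P x h})"
  proof (intro set_eqI iffI)
    fix x assume "x \<in> (\<Inter>n. \<Union>h \<in> {h. h \<noteq> 0 \<and> \<bar>h\<bar> < inverse (Suc n)}. {x. P x h})"
    then have small: "\<exists>h. h \<noteq> 0 \<and> \<bar>h\<bar> < inverse (Suc n) \<and> P x h" for n
      by blast
    have "\<exists>h. h \<noteq> 0 \<and> \<bar>h\<bar> < d \<and> P x h" if d: "d > 0" for d
    proof -
      obtain n where "inverse (Suc n) < d"
        using reals_Archimedean[OF d] by blast
      with small[of n] show ?thesis
        by (meson less_trans)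
    qed
    then show "x \<in> {x. \<exists>\<^sub>F h in at 0. P x h}"
      by (simp add: freq_iff)
  next
    fix x assume "x \<in> {x. \<exists>\<^sub>F h in at 0. P x h}"
    then have "\<exists>h. h \<noteq> 0 \<and> \<bar>h\<bar> < inverse (Suc n) \<and> P x h" for n
      by (simp add: freq_iff)
    then show "x \<in> (\<Inter>n. \<Union>h \<in> {h. h \<noteq> 0 \<and> \<bar>h\<bar> < inverse (Suc n)}. {x. P x h})"
      by blast
  qed
  also have "\<dots> \<in> sets borel"
    by (intro sets.countable_INT image_subsetI borel_open open_UN ballI assms) auto
  finally show ?thesis .
qed

lemma emeasure_disjoint_UN_mono:
  assumes "countable I" "disjoint_family_on X I"
    and "\<And>i. i \<in> I \<Longrightarrow> X i \<in> sets M" "\<And>i. i \<in> I \<Longrightarrow> X i \<in> sets N"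
    and "\<And>i. i \<in> I \<Longrightarrow> emeasure M (X i) \<le> emeasure N (X i)"
  shows "emeasure M (\<Union>(X ` I)) \<le> emeasure N (\<Union>(X ` I))"
  using assms by (auto simp: emeasure_UN_countable intro!: nn_integral_mono)

lemma emeasure_lborel_cball: "0 < r \<Longrightarrow> emeasure lborel (cball (c::real) r) = ennreal (2 * r)"
  using emeasure_lborel_Icc[of "c - r" "c + r"] by (simp add: cball_eq_atLeastAtMost)

lemma integral_le_off_negligible:
  fixes f g :: "'a::euclidean_space \<Rightarrow> real"
  assumes "f integrable_on S" "g integrable_on S" "negligible N" "\<And>x. x \<in> S - N \<Longrightarrow> f x \<le> g x"
  shows "integral S f \<le> integral S g"
proof -
  define f' where "f' x = (if x \<in> N then g x else f x)" for x
  have "integral S f = integral S f'"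
    using assms(3) by (intro integral_spike) (auto simp: f'_def)
  also have "\<dots> \<le> integral S g"
  proof (rule integral_le[OF _ assms(2)])
    show "f' integrable_on S"
      by (rule integrable_spike[OF assms(1,3)]) (simp add: f'_def)
  qed (use assms(4) in \<open>auto simp: f'_def\<close>)
  finally show ?thesis .
qed

lemma negligible_cballs_diff_balls:
  fixes C :: "(real \<times> real) set"
  assumes "countable C"
  shows "negligible ((\<Union>(c, r) \<in> C. cball c r) - (\<Union>(c, r) \<in> C. ball c r))"
proof -
  have "(\<Union>(c, r) \<in> C. cball c r) - (\<Union>(c, r) \<in> C. ball c r)
          \<subseteq> (\<lambda>(c, r). c - r) ` C \<union> (\<lambda>(c, r). c + r) ` C"
    by (force simp: dist_real_def)
  moreover have "countable ((\<lambda>(c, r). c - r) ` C \<union> (\<lambda>(c, r). c + r) ` C)"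
    using assms by auto
  ultimately show ?thesis
    by (meson negligible_subset negligible_iff_null_sets null_sets_completionI
        countable_imp_null_set_lborel)
qed

lemma emeasure_lebesgue_le_cover:
  assumes "B \<in> sets borel" "negligible (S - B)"
  shows "emeasure lebesgue S \<le> emeasure lborel B"
proof -
  have "B \<union> (S - B) \<in> sets lebesgue"
    using assms by (intro sets.Un) (auto intro: negligible_imp_sets)
  then have "emeasure lebesgue S \<le> emeasure lebesgue (B \<union> (S - B))"
    by (rule emeasure_mono[rotated]) blast
  also have "\<dots> = emeasure lebesgue B"
    using assms by (intro emeasure_Un_null_set) (auto simp: negligible_iff_null_sets)
  also have "\<dots> = emeasure lborel B"
    using assms(1) by simp
  finally show ?thesis .
qed

locale mono_nonexpansive =
  fixes F :: "real \<Rightarrow> real"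
  assumes mono: "x \<le> y \<Longrightarrow> F x \<le> F y"
    and nonexpansive: "x \<le> y \<Longrightarrow> F y - F x \<le> y - x"
begin

definition diff_quotient :: "real \<Rightarrow> real \<Rightarrow> real" where
  "diff_quotient x h = (F (x + h) - F x) / h"

lemma diff_quotient_nonneg: "0 \<le> diff_quotient x h"
  using mono[of x "x + h"] mono[of "x + h" x]
  by (cases "0 \<le> h") (auto simp: diff_quotient_def divide_nonpos_neg zero_le_divide_iff)

lemma diff_quotient_le_1: "diff_quotient x h \<le> 1"
  using nonexpansive[of x "x + h"] nonexpansive[of "x + h" x]
  by (cases "0 < h" "h = 0" rule: case_split[case_product case_split])
    (auto simp: diff_quotient_def divide_simps)

lemma lipschitz: "1-lipschitz_on UNIV F"
proof (rule lipschitz_onI)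
  fix x y :: real
  show "dist (F x) (F y) \<le> 1 * dist x y"
    using mono[of x y] nonexpansive[of x y] mono[of y x] nonexpansive[of y x]
    by (cases "x \<le> y") (auto simp: dist_real_def)
qed simp

lemma continuous_on: "continuous_on S F"
  using lipschitz_on_continuous_on[OF lipschitz] continuous_on_subset by blast

lemma continuous_on_diff_quotient: "continuous_on S (\<lambda>x. diff_quotient x h)"
  unfolding diff_quotient_def
  by (cases "h = 0") (auto intro!: continuous_intros continuous_on_compose2[OF continuous_on])

definition oscillation_set :: "real \<Rightarrow> real \<Rightarrow> real set" where
  "oscillation_set p q =
     {x. (\<exists>\<^sub>F h in at 0. diff_quotient x h < p) \<and> (\<exists>\<^sub>F h in at 0. q < diff_quotient x h)}"

lemma differentiable_if_not_oscillating:
  assumes "\<And>p q. p \<in> \<rat> \<Longrightarrow> q \<in> \<rat> \<Longrightarrow> p < q \<Longrightarrow> x \<notin> oscillation_set p q"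
  shows "F differentiable (at x)"
proof -
  define Q where "Q h = ereal (diff_quotient x h)" for h
  define L where "L = Liminf (at 0) Q"
  define U where "U = Limsup (at 0) Q"
  have "0 \<le> L" "L \<le> U" "U \<le> 1"
    unfolding L_def U_def Q_def
    using diff_quotient_nonneg diff_quotient_le_1
    by (auto intro!: Liminf_bounded Limsup_bounded Liminf_le_Limsup)
  then obtain l u where lu: "L = ereal l" "U = ereal u" "l \<le> u"
    by (cases L; cases U) auto
  have "l = u"
  proof (rule ccontr)
    assume "l \<noteq> u"
    with lu obtain p q where pq: "p \<in> \<rat>" "q \<in> \<rat>" "l < p" "p < q" "q < u"
      by (metis Rats_dense_in_real order_le_neq_trans)
    have "\<exists>\<^sub>F h in at 0. diff_quotient x h < p"
    proof (rule ccontr)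
      assume "\<not> ?thesis"
      then have "ereal p \<le> L"
        unfolding L_def Q_def not_frequently not_less by (auto intro: Liminf_bounded)
      with pq(3) lu(1) show False by simp
    qed
    moreover have "\<exists>\<^sub>F h in at 0. q < diff_quotient x h"
    proof (rule ccontr)
      assume "\<not> ?thesis"
      then have "U \<le> ereal q"
        unfolding U_def Q_def not_frequently not_less by (auto intro: Limsup_bounded)
      with pq(5) lu(2) show False by simp
    qed
    ultimately show False
      using assms[OF pq(1,2,4)] by (simp add: oscillation_set_def)
  qed
  then have "(Q \<longlongrightarrow> ereal l) (at 0)"
    using lu by (intro Liminf_eq_Limsup) (auto simp: L_def U_def)
  then have "((\<lambda>h. (F (x + h) - F x) / h) \<longlongrightarrow> l) (at 0)"
    unfolding Q_def[abs_def] lim_ereal diff_quotient_def .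
  then show ?thesis
    unfolding real_differentiable_def DERIV_def by blast
qed

lemma vitali_cover_diff_quotient:
  assumes "open W" "S \<subseteq> W" and freq: "\<And>x. x \<in> S \<Longrightarrow> \<exists>\<^sub>F h in at 0. P (diff_quotient x h)"
  obtains C where "countable C" "disjoint_family_on (\<lambda>(c, r). cball c r) C"
    "\<And>c r. (c, r) \<in> C \<Longrightarrow> 0 < r \<and> cball c r \<subseteq> W \<and> P (diff_quotient (c - r) (2 * r))"
    "negligible (S - (\<Union>(c, r) \<in> C. cball c r))"
proof -
  define K where "K = {(c, r). 0 < r \<and> cball c r \<subseteq> W \<and> P (diff_quotient (c - r) (2 * r))}"
  have small_ball: "\<exists>i. i \<in> K \<and> x \<in> cball (fst i) (snd i) \<and> snd i < d" if "x \<in> S" "0 < d" for x d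
  proof -
    obtain e where "0 < e" "ball x e \<subseteq> W"
      using assms(1,2) \<open>x \<in> S\<close> open_contains_ball by blast
    have "\<forall>\<delta>>0. \<exists>h. h \<noteq> 0 \<and> \<bar>h\<bar> < \<delta> \<and> P (diff_quotient x h)"
      using freq[OF \<open>x \<in> S\<close>] by (simp add: frequently_at dist_real_def)
    then obtain h where h: "h \<noteq> 0" "\<bar>h\<bar> < min e d" "P (diff_quotient x h)"
      using \<open>0 < e\<close> \<open>0 < d\<close> by (auto dest: spec[of _ "min e d"])
    \<comment> \<open>the interval between x and x + h is the ball with centre x + h/2 and radius |h|/2\<close>
    define r where "r = \<bar>h\<bar> / 2"
    define c where "c = x + h / 2"
    have r: "0 < r" "r < d"
      using h(1,2) by (auto simp: r_def)
    have dist_cx: "dist c x = r"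
      by (simp add: c_def r_def dist_real_def)
    consider "c - r = x" "2 * r = h" | "c - r = x + h" "2 * r = - h"
      by (cases "h < 0") (simp_all add: c_def r_def abs_if)
    then have "diff_quotient (c - r) (2 * r) = diff_quotient x h"
      by cases (simp_all add: diff_quotient_def divide_minus_right flip: divide_minus_left)
    moreover have "cball c r \<subseteq> ball x e"
    proof
      fix y assume "y \<in> cball c r"
      then have "dist x y \<le> dist c x + dist c y"
        by (simp add: dist_triangle3)
      with \<open>y \<in> cball c r\<close> dist_cx h(2) show "y \<in> ball x e"
        by (simp add: r_def)
    qed
    ultimately have "(c, r) \<in> K"
      using h(3) r(1) \<open>ball x e \<subseteq> W\<close> unfolding K_def by auto
    moreover have "x \<in> cball c r"
      using dist_cx by simp
    ultimately show ?thesis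
      using r(2) by (intro exI[of _ "(c, r)"]) simp
  qed
  have pos: "0 < snd i" if "i \<in> K" for i
    using that by (auto simp: K_def)
  obtain C where C: "countable C" "C \<subseteq> K"
    "pairwise (\<lambda>i j. disjnt (cball (fst i) (snd i)) (cball (fst j) (snd j))) C"
    "negligible (S - (\<Union>i \<in> C. cball (fst i) (snd i)))"
    by (rule Vitali_covering_theorem_cballs[of K snd S fst, OF pos small_ball])
  show ?thesis
  proof (rule that)
    show "countable C" by fact
    show "disjoint_family_on (\<lambda>(c, r). cball c r) C"
      using C(3) unfolding disjoint_family_on_def pairwise_def disjnt_def case_prod_beta' by blast
    show "0 < r \<and> cball c r \<subseteq> W \<and> P (diff_quotient (c - r) (2 * r))" if "(c, r) \<in> C" for c r
      using that C(2) by (auto simp: K_def)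
    show "negligible (S - (\<Union>(c, r) \<in> C. cball c r))"
      using C(4) unfolding case_prod_beta' .
  qed
qed

lemma emeasure_interval_measure_cball:
  assumes "0 < r"
  shows "emeasure (interval_measure F) (cball c r) = ennreal (2 * r * diff_quotient (c - r) (2 * r))"
  using emeasure_interval_measure_Icc[of "c - r" "c + r" F] mono continuous_on assms
  by (simp add: cball_eq_atLeastAtMost diff_quotient_def add.commute)

lemma interval_measure_cballs_le:
  assumes "countable C" "disjoint_family_on (\<lambda>(c, r). cball c r) C" "0 \<le> p"
    and "\<And>c r. (c, r) \<in> C \<Longrightarrow> 0 < r \<and> diff_quotient (c - r) (2 * r) \<le> p"
  shows "emeasure (interval_measure F) (\<Union>(c, r) \<in> C. cball c r)
           \<le> p * emeasure lborel (\<Union>(c, r) \<in> C. cball c r)"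
proof -
  have "emeasure (interval_measure F) (\<Union>(c, r) \<in> C. cball c r)
          \<le> emeasure (scale_measure p lborel) (\<Union>(c, r) \<in> C. cball c r)"
  proof (rule emeasure_disjoint_UN_mono[OF assms(1,2)])
    fix i assume "i \<in> C"
    then obtain c r where i: "i = (c, r)" "0 < r" "diff_quotient (c - r) (2 * r) \<le> p"
      using assms(4) by (cases i) blast
    have "emeasure (interval_measure F) (cball c r) = ennreal (2 * r * diff_quotient (c - r) (2 * r))"
      using i(2) by (rule emeasure_interval_measure_cball)
    also have "\<dots> \<le> ennreal (p * (2 * r))"
      using i(2,3) by (intro ennreal_leI) (simp add: mult.commute)
    also have "\<dots> = emeasure (scale_measure p lborel) (cball c r)"
      using i(2) by (simp add: emeasure_lborel_cball ennreal_mult'')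
    finally show "emeasure (interval_measure F) (case i of (c, r) \<Rightarrow> cball c r)
                 \<le> emeasure (scale_measure p lborel) (case i of (c, r) \<Rightarrow> cball c r)"
      by (simp add: i(1))
  qed auto
  then show ?thesis by simp
qed

lemma interval_measure_cballs_ge:
  assumes "countable C" "disjoint_family_on (\<lambda>(c, r). cball c r) C" "0 \<le> q"
    and "\<And>c r. (c, r) \<in> C \<Longrightarrow> 0 < r \<and> q \<le> diff_quotient (c - r) (2 * r)"
  shows "q * emeasure lborel (\<Union>(c, r) \<in> C. cball c r)
           \<le> emeasure (interval_measure F) (\<Union>(c, r) \<in> C. cball c r)"
proof -
  have "emeasure (scale_measure q lborel) (\<Union>(c, r) \<in> C. cball c r)
          \<le> emeasure (interval_measure F) (\<Union>(c, r) \<in> C. cball c r)"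
  proof (rule emeasure_disjoint_UN_mono[OF assms(1,2)])
    fix i assume "i \<in> C"
    then obtain c r where i: "i = (c, r)" "0 < r" "q \<le> diff_quotient (c - r) (2 * r)"
      using assms(4) by (cases i) blast
    have "emeasure (scale_measure q lborel) (cball c r) = ennreal (q * (2 * r))"
      using i(2) by (simp add: emeasure_lborel_cball ennreal_mult'')
    also have "\<dots> \<le> ennreal (2 * r * diff_quotient (c - r) (2 * r))"
      using i(2,3) by (intro ennreal_leI) (simp add: mult.commute)
    also have "\<dots> = emeasure (interval_measure F) (cball c r)"
      using i(2) by (rule emeasure_interval_measure_cball[symmetric])
    finally show "emeasure (scale_measure q lborel) (case i of (c, r) \<Rightarrow> cball c r)
                 \<le> emeasure (interval_measure F) (case i of (c, r) \<Rightarrow> cball c r)"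
      by (simp add: i(1))
  qed auto
  then show ?thesis by simp
qed

text \<open>Cover S up to a null set by disjoint balls inside U on which F has slope below p, then
  cover S again inside those balls by disjoint balls on which F has slope above q; the
  Lebesgue-Stieltjes measure of F separates the Lebesgue measures of the two covers.\<close>

lemma oscillation_set_emeasure_le:
  assumes "0 \<le> p" "0 \<le> q" "S \<subseteq> oscillation_set p q" "S \<in> sets lebesgue" "open U" "S \<subseteq> U"
  shows "q * emeasure lebesgue S \<le> p * emeasure lebesgue U"
proof -
  let ?\<nu> = "interval_measure F"
  obtain C1 where C1: "countable C1" "disjoint_family_on (\<lambda>(c, r). cball c r) C1"
    "\<And>c r. (c, r) \<in> C1 \<Longrightarrow> 0 < r \<and> cball c r \<subseteq> U \<and> diff_quotient (c - r) (2 * r) < p"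
    "negligible (S - (\<Union>(c, r) \<in> C1. cball c r))"
    by (rule vitali_cover_diff_quotient[OF \<open>open U\<close> \<open>S \<subseteq> U\<close>, of "\<lambda>v. v < p"])
      (use assms(3) in \<open>auto simp: oscillation_set_def\<close>)
  define B1 where "B1 = (\<Union>(c, r) \<in> C1. cball c r)"
  define V where "V = (\<Union>(c, r) \<in> C1. ball c r)"
  have "open V"
    by (auto simp: V_def)
  obtain C2 where C2: "countable C2" "disjoint_family_on (\<lambda>(c, r). cball c r) C2"
    "\<And>c r. (c, r) \<in> C2 \<Longrightarrow> 0 < r \<and> cball c r \<subseteq> V \<and> q < diff_quotient (c - r) (2 * r)"
    "negligible (S \<inter> V - (\<Union>(c, r) \<in> C2. cball c r))"
    by (rule vitali_cover_diff_quotient[OF \<open>open V\<close>, of "S \<inter> V" "\<lambda>v. q < v"])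
      (use assms(3) in \<open>auto simp: oscillation_set_def\<close>)
  define B2 where "B2 = (\<Union>(c, r) \<in> C2. cball c r)"
  have "negligible (B1 - V)"
    unfolding B1_def V_def using C1(1) by (rule negligible_cballs_diff_balls)
  then have "negligible ((S - B1) \<union> (B1 - V) \<union> (S \<inter> V - B2))"
    using C1(4) C2(4) by (auto simp: B1_def B2_def)
  then have "negligible (S - B2)"
    by (rule negligible_subset) blast
  have "B2 \<in> sets borel" "B1 \<in> sets borel"
    using C1(1) C2(1) by (auto simp: B1_def B2_def)
  have "B2 \<subseteq> V"
    unfolding B2_def using C2(3) by (intro UN_least) (auto split: prod.splits)
  moreover have "V \<subseteq> B1"
    unfolding V_def B1_def by (intro UN_mono) (auto split: prod.splits)
  ultimately have "B2 \<subseteq> B1"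
    by blast
  have "B1 \<subseteq> U"
    unfolding B1_def using C1(3) by (intro UN_least) (auto split: prod.splits)
  have "q * emeasure lebesgue S \<le> q * emeasure lborel B2"
    using \<open>B2 \<in> sets borel\<close> \<open>negligible (S - B2)\<close>
    by (intro mult_left_mono emeasure_lebesgue_le_cover) simp_all
  also have "\<dots> \<le> emeasure ?\<nu> B2"
    unfolding B2_def using C2 assms(2) by (intro interval_measure_cballs_ge) (auto intro: less_imp_le)
  also have "\<dots> \<le> emeasure ?\<nu> B1"
    using \<open>B2 \<subseteq> B1\<close> \<open>B1 \<in> sets borel\<close> by (intro emeasure_mono) auto
  also have "\<dots> \<le> p * emeasure lborel B1"
    unfolding B1_def using C1 assms(1) by (intro interval_measure_cballs_le) (auto intro: less_imp_le)
  also have "\<dots> \<le> p * emeasure lebesgue U"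
    using \<open>B1 \<subseteq> U\<close> \<open>B1 \<in> sets borel\<close> \<open>open U\<close>
    by (intro mult_left_mono) (auto intro!: emeasure_mono)
  finally show ?thesis .
qed

lemma oscillation_set_measure_le:
  assumes "0 \<le> p" "0 \<le> q" "S \<subseteq> oscillation_set p q" "S \<in> lmeasurable" "0 < \<epsilon>"
  shows "q * measure lebesgue S \<le> p * (measure lebesgue S + \<epsilon>)"
proof -
  obtain U where U: "open U" "S \<subseteq> U" "U - S \<in> lmeasurable" "emeasure lebesgue (U - S) < \<epsilon>"
    using sets_lebesgue_outer_open[of S \<epsilon>] assms(4,5) by auto
  have "emeasure lebesgue U = emeasure lebesgue S + emeasure lebesgue (U - S)"
    using U(2,3) assms(4) plus_emeasure[of S lebesgue "U - S"] by (simp add: Un_absorb1)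
  also have "\<dots> \<le> ennreal (measure lebesgue S) + ennreal \<epsilon>"
    using U(4) assms(4) by (intro add_mono) (auto simp: emeasure_eq_measure2)
  also have "\<dots> = ennreal (measure lebesgue S + \<epsilon>)"
    using assms(5) by simp
  finally have U_le: "emeasure lebesgue U \<le> ennreal (measure lebesgue S + \<epsilon>)" .
  have "ennreal (q * measure lebesgue S) = q * emeasure lebesgue S"
    using assms(2,4) by (simp add: emeasure_eq_measure2 ennreal_mult)
  also have "\<dots> \<le> p * emeasure lebesgue U"
    using assms(1-4) U(1,2) by (intro oscillation_set_emeasure_le) auto
  also have "\<dots> \<le> ennreal (p * (measure lebesgue S + \<epsilon>))"
    using U_le assms(1,5) by (simp add: mult_left_mono ennreal_mult)
  finally show ?thesis
    using assms(1,5) by (simp add: ennreal_le_iff)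
qed

lemma negligible_oscillation_set:
  assumes "p < q"
  shows "negligible (oscillation_set p q)"
proof (cases "p \<le> 0")
  case True
  have "\<not> (\<exists>\<^sub>F h in at 0. diff_quotient x h < p)" for x
    using True diff_quotient_nonneg[of x] by (simp add: not_frequently not_less order_trans)
  then show ?thesis
    by (simp add: oscillation_set_def)
next
  case False
  let ?E = "oscillation_set p q"
  have "open {x. diff_quotient x h < p}" "open {x. q < diff_quotient x h}" for h
    by (auto intro: open_Collect_less continuous_on_diff_quotient continuous_on_const)
  then have "?E \<in> sets borel"
    unfolding oscillation_set_def Collect_conj_eq
    by (intro sets.Int frequently_at_0_in_sets_borel)
  have "negligible (?E \<inter> cball 0 k)" for k :: real
  proof -
    define S where "S = ?E \<inter> cball 0 k"
    have S: "S \<in> lmeasurable"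
      using \<open>?E \<in> sets borel\<close> by (intro fmeasurableI2[OF lmeasurable_cball[of 0 k]]) (auto simp: S_def)
    define m where "m = measure lebesgue S"
    have "(q - p) * m \<le> 0"
    proof (rule field_le_epsilon)
      fix e :: real assume "0 < e"
      have "q * m \<le> p * (m + e / p)"
        unfolding m_def using False assms \<open>0 < e\<close> S
        by (intro oscillation_set_measure_le) (auto simp: S_def)
      with False show "(q - p) * m \<le> 0 + e"
        by (simp add: algebra_simps)
    qed
    with assms have "m = 0"
      using measure_nonneg[of lebesgue S] by (simp add: m_def mult_le_0_iff)
    then show ?thesis
      using S by (simp add: S_def m_def negligible_iff_measure0)
  qed
  moreover have "?E = (\<Union>k. ?E \<inter> cball 0 (real k))"
    by (auto simp: dist_real_def intro: real_arch_simple)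
  ultimately show ?thesis
    using negligible_countable_Union[of "range (\<lambda>k. ?E \<inter> cball 0 (real k))"] by auto
qed

lemma negligible_not_differentiable: "negligible {x. \<not> F differentiable (at x)}"
proof -
  define I where "I = {(p, q). p \<in> \<rat> \<and> q \<in> \<rat> \<and> p < (q::real)}"
  have "countable I"
    by (rule countable_subset[of _ "\<rat> \<times> \<rat>"]) (auto simp: I_def countable_rat)
  then have "negligible (\<Union>(p, q) \<in> I. oscillation_set p q)"
    by (intro negligible_countable_Union) (auto simp: I_def negligible_oscillation_set)
  moreover have "{x. \<not> F differentiable (at x)} \<subseteq> (\<Union>(p, q) \<in> I. oscillation_set p q)"
    using differentiable_if_not_oscillating by (auto simp: I_def)
  ultimately show ?thesis
    using negligible_subset by blast
qed

lemma deriv_nonneg_le_1: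
  assumes "F differentiable (at x)"
  shows "0 \<le> deriv F x \<and> deriv F x \<le> 1"
proof -
  have "(diff_quotient x \<longlongrightarrow> deriv F x) (at 0)"
    using assms unfolding DERIV_deriv_iff_real_differentiable[symmetric] DERIV_def
    by (simp add: diff_quotient_def[abs_def])
  then show ?thesis
    using diff_quotient_nonneg diff_quotient_le_1
    by (auto intro: tendsto_lowerbound tendsto_upperbound always_eventually)
qed

lemma integrable_on_interval: "F integrable_on {a..b}"
  by (rule integrable_continuous_interval[OF continuous_on])

lemma integral_window_bounds:
  assumes "0 < \<delta>"
  shows "\<delta> * F c \<le> integral {c..c + \<delta>} F" "integral {c..c + \<delta>} F \<le> \<delta> * (F c + \<delta>)"
proof -
  have "integral {c..c + \<delta>} (\<lambda>t. F c) \<le> integral {c..c + \<delta>} F"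
    by (rule integral_le[OF _ integrable_on_interval]) (auto intro: mono)
  then show "\<delta> * F c \<le> integral {c..c + \<delta>} F"
    using assms by (simp add: mult.commute)
  have "F t \<le> F c + \<delta>" if "t \<in> {c..c + \<delta>}" for t
    using that nonexpansive[of c t] by auto
  then have "integral {c..c + \<delta>} F \<le> integral {c..c + \<delta>} (\<lambda>t. F c + \<delta>)"
    by (intro integral_le[OF integrable_on_interval]) auto
  then show "integral {c..c + \<delta>} F \<le> \<delta> * (F c + \<delta>)"
    using assms by (simp add: mult.commute)
qed

lemma integral_diff_quotient:
  assumes "a \<le> b" "0 < \<delta>"
  shows "integral {a..b} (\<lambda>t. diff_quotient t \<delta>)
           = (integral {b..b + \<delta>} F - integral {a..a + \<delta>} F) / \<delta>"
proof -
  have shift: "integral {a..b} (\<lambda>t. F (t + \<delta>)) = integral {a + \<delta>..b + \<delta>} F"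
    using integral_shift_Icc_real[of a b F \<delta>] by (simp add: o_def add.commute)
  have "integral {a..a + \<delta>} F + integral {a + \<delta>..b + \<delta>} F = integral {a..b + \<delta>} F"
    "integral {a..b} F + integral {b..b + \<delta>} F = integral {a..b + \<delta>} F"
    using assms by (auto intro!: Henstock_Kurzweil_Integration.integral_combine integrable_on_interval)
  moreover have "(\<lambda>t. F (t + \<delta>)) integrable_on {a..b}"
    by (intro integrable_continuous_interval continuous_on_compose2[OF continuous_on]
        continuous_intros) auto
  ultimately show ?thesis
    unfolding diff_quotient_def
    by (simp add: integral_diff integrable_on_interval shift)
qed

lemma integral_diff_quotient_approx:
  assumes "a \<le> b" "0 < \<delta>"
  shows "\<bar>integral {a..b} (\<lambda>t. diff_quotient t \<delta>) - (F b - F a)\<bar> \<le> \<delta>"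
proof -
  define I where "I = integral {b..b + \<delta>} F - integral {a..a + \<delta>} F"
  have "(F b - F a - \<delta>) * \<delta> \<le> I" "I \<le> (F b - F a + \<delta>) * \<delta>"
    using integral_window_bounds[OF assms(2), of a] integral_window_bounds[OF assms(2), of b]
    by (auto simp: I_def algebra_simps)
  then have "F b - F a - \<delta> \<le> I / \<delta>" "I / \<delta> \<le> F b - F a + \<delta>"
    using assms(2) by (simp_all add: le_divide_eq divide_le_eq)
  then show ?thesis
    unfolding integral_diff_quotient[OF assms] I_def[symmetric] by linarith
qed

lemma deriv_has_integral:
  assumes "a \<le> b"
  shows "(deriv F has_integral F b - F a) {a..b}"
proof -
  define N where "N = {x. \<not> F differentiable (at x)}"
  define \<delta> where "\<delta> k = inverse (real (Suc k))" for k
  have \<delta>: "0 < \<delta> k" for k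
    by (simp add: \<delta>_def)
  \<comment> \<open>pointwise convergence is only available off N, so the approximants are set to 0 on N\<close>
  define f where "f k t = (if t \<in> N then 0 else diff_quotient t (\<delta> k))" for k t
  define g where "g t = (if t \<in> N then 0 else deriv F t)" for t
  have "(g has_integral F b - F a) {a..b}"
  proof (rule has_integral_dominated_convergence)
    show "(f k has_integral integral {a..b} (\<lambda>t. diff_quotient t (\<delta> k))) {a..b}" for k
      using negligible_not_differentiable
      by (intro has_integral_spike[OF _ _ integrable_integral] integrable_continuous_interval
          continuous_on_diff_quotient) (auto simp: f_def N_def)
    show "\<forall>t\<in>{a..b}. norm (f k t) \<le> 1" for k
      using diff_quotient_nonneg diff_quotient_le_1 by (simp add: f_def)
    show "\<forall>t\<in>{a..b}. (\<lambda>k. f k t) \<longlonglongrightarrow> g t"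
    proof
      fix t
      show "(\<lambda>k. f k t) \<longlonglongrightarrow> g t"
      proof (cases "t \<in> N")
        case False
        then have "(diff_quotient t \<longlongrightarrow> deriv F t) (at 0)"
          unfolding N_def DERIV_deriv_iff_real_differentiable[symmetric] DERIV_def
          by (simp add: diff_quotient_def[abs_def])
        moreover have "filterlim \<delta> (at 0) sequentially"
          using \<delta> LIMSEQ_inverse_real_of_nat
          by (auto simp: filterlim_at \<delta>_def[abs_def] intro: always_eventually)
        ultimately show ?thesis
          using False by (simp add: f_def g_def filterlim_compose[of "diff_quotient t"])
      qed (simp add: f_def g_def)
    qed
    show "(\<lambda>k. integral {a..b} (\<lambda>t. diff_quotient t (\<delta> k))) \<longlonglongrightarrow> F b - F a"
    proof (rule LIM_zero_cancel, rule Lim_null_comparison)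
      show "\<forall>\<^sub>F k in sequentially.
              norm (integral {a..b} (\<lambda>t. diff_quotient t (\<delta> k)) - (F b - F a)) \<le> \<delta> k"
        using integral_diff_quotient_approx[OF assms \<delta>] by simp
      show "\<delta> \<longlonglongrightarrow> 0"
        unfolding \<delta>_def by (rule LIMSEQ_inverse_real_of_nat)
    qed
  qed auto
  then show ?thesis
    by (rule has_integral_spike[OF negligible_not_differentiable, rotated]) (auto simp: g_def N_def)
qed

lemma deriv_absolutely_integrable: "deriv F absolutely_integrable_on {a..b}"
proof (cases "a \<le> b")
  case True
  define N where "N = {x. \<not> F differentiable (at x)}"
  have "(\<lambda>t. if t \<in> N then 0 else deriv F t) absolutely_integrable_on {a..b}"
  proof (rule nonnegative_absolutely_integrable_1)
    show "(\<lambda>t. if t \<in> N then 0 else deriv F t) integrable_on {a..b}"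
      using has_integral_integrable[OF deriv_has_integral[OF True]] negligible_not_differentiable
      by (rule integrable_spike) (auto simp: N_def)
  qed (use deriv_nonneg_le_1 in \<open>auto simp: N_def\<close>)
  then show ?thesis
    using negligible_not_differentiable by (rule absolutely_integrable_spike) (auto simp: N_def)
qed simp

end

lemma frechet_bounds_deriv:
  fixes a b g :: "real \<Rightarrow> real"
  assumes "(a has_real_derivative da) (at t)" "(b has_real_derivative db) (at t)"
    and "(g has_real_derivative dg) (at t)" and "0 < \<epsilon>"
    and incr: "\<And>k. 0 < k \<Longrightarrow> k < \<epsilon> \<Longrightarrow>
       0 \<le> g (t + k) - g t \<and> g (t + k) - g t \<le> a (t + k) - a t \<and> g (t + k) - g t \<le> b (t + k) - b t \<and>
       (a (t + k) - a t) + (b (t + k) - b t) - k \<le> g (t + k) - g t"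
  shows "W2 da db \<le> dg \<and> dg \<le> M2 da db"
proof -
  define Q where "Q f k = (f (t + k) - f t) / k" for f :: "real \<Rightarrow> real" and k
  have lim: "(Q f \<longlongrightarrow> d) (at_right 0)" if "(f has_real_derivative d) (at t)" for f d
    using that unfolding DERIV_def Q_def[abs_def] by (rule tendsto_mono[OF at_le, rotated]) simp
  have "\<forall>\<^sub>F k in at_right 0. 0 < k \<and> k < \<epsilon>"
    using eventually_at_right_real[OF assms(4)] by (auto elim: eventually_mono)
  then have ev: "\<forall>\<^sub>F k in at_right 0.
      0 \<le> Q g k \<and> Q g k \<le> Q a k \<and> Q g k \<le> Q b k \<and> Q a k + Q b k - 1 \<le> Q g k"
  proof (rule eventually_mono)
    fix k assume k: "0 < k \<and> k < \<epsilon>"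
    have "Q a k + Q b k - 1 = ((a (t + k) - a t) + (b (t + k) - b t) - k) / k"
      using k by (simp add: Q_def field_simps)
    then show "0 \<le> Q g k \<and> Q g k \<le> Q a k \<and> Q g k \<le> Q b k \<and> Q a k + Q b k - 1 \<le> Q g k"
      using incr[of k] k by (auto simp: Q_def intro: divide_right_mono)
  qed
  note le_lim = tendsto_le[OF trivial_limit_at_right_real]
  have "0 \<le> dg"
    by (rule le_lim[OF lim[OF assms(3)] tendsto_const]) (rule eventually_mono[OF ev], auto)
  moreover have "dg \<le> da"
    by (rule le_lim[OF lim[OF assms(1)] lim[OF assms(3)]]) (rule eventually_mono[OF ev], auto)
  moreover have "dg \<le> db"
    by (rule le_lim[OF lim[OF assms(2)] lim[OF assms(3)]]) (rule eventually_mono[OF ev], auto)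
  moreover have "da + db - 1 \<le> dg"
    by (rule le_lim[OF lim[OF assms(3)] tendsto_diff[OF tendsto_add[OF lim[OF assms(1)] lim[OF assms(2)]]
          tendsto_const]]) (rule eventually_mono[OF ev], auto)
  ultimately show ?thesis
    by (auto simp: W2_def M2_def)
qed

lemma
  assumes "mono_nonexpansive a" "mono_nonexpansive b"
  shows W2_deriv_absolutely_integrable:
      "(\<lambda>t. W2 (deriv a t) (deriv b t)) absolutely_integrable_on {c..d}"
    and M2_deriv_absolutely_integrable:
      "(\<lambda>t. M2 (deriv a t) (deriv b t)) absolutely_integrable_on {c..d}"
  using mono_nonexpansive.deriv_absolutely_integrable[OF assms(1)]
    mono_nonexpansive.deriv_absolutely_integrable[OF assms(2)]
  unfolding W2_def M2_def
  by (auto intro!: absolutely_integrable_max_1 absolutely_integrable_min_1 set_integral_diff(1)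
      set_integral_add(1) absolutely_integrable_on_const)

lemma integral_frechet_bounds_deriv:
  assumes a: "mono_nonexpansive a" and b: "mono_nonexpansive b" and g: "mono_nonexpansive g"
    and "c \<le> d" "negligible N"
    and bounds: "\<And>t. t \<in> {c..d} - N \<Longrightarrow>
       W2 (deriv a t) (deriv b t) \<le> deriv g t \<and> deriv g t \<le> M2 (deriv a t) (deriv b t)"
  shows "integral {c..d} (\<lambda>t. W2 (deriv a t) (deriv b t)) \<le> g d - g c"
    and "g d - g c \<le> integral {c..d} (\<lambda>t. M2 (deriv a t) (deriv b t))"
proof -
  have g_int: "(deriv g has_integral g d - g c) {c..d}"
    using mono_nonexpansive.deriv_has_integral[OF g \<open>c \<le> d\<close>] .
  have "integral {c..d} (\<lambda>t. W2 (deriv a t) (deriv b t)) \<le> integral {c..d} (deriv g)"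
    using bounds W2_deriv_absolutely_integrable[OF a b] g_int
    by (intro integral_le_off_negligible[OF _ _ \<open>negligible N\<close>])
      (auto simp: set_lebesgue_integral_eq_integral(1))
  then show "integral {c..d} (\<lambda>t. W2 (deriv a t) (deriv b t)) \<le> g d - g c"
    using g_int by (simp add: integral_unique)
  have "integral {c..d} (deriv g) \<le> integral {c..d} (\<lambda>t. M2 (deriv a t) (deriv b t))"
    using bounds M2_deriv_absolutely_integrable[OF a b] g_int
    by (intro integral_le_off_negligible[OF _ _ \<open>negligible N\<close>])
      (auto simp: set_lebesgue_integral_eq_integral(1))
  then show "g d - g c \<le> integral {c..d} (\<lambda>t. M2 (deriv a t) (deriv b t))"
    using g_int by (simp add: integral_unique)
qed

lemma copula3_swap_23:
  assumes "copula3 C"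
  shows "copula3 (\<lambda>u v w. C u w v)"
  unfolding copula3_def
proof (intro conjI allI impI ballI)
  fix a1 b1 a2 b2 a3 b3 :: real
  assume "a1 \<in> {0..1}" "b1 \<in> {0..1}" "a2 \<in> {0..1}" "b2 \<in> {0..1}" "a3 \<in> {0..1}" "b3 \<in> {0..1}"
    "a1 \<le> b1" "a2 \<le> b2" "a3 \<le> b3"
  then show "0 \<le> C b1 b3 b2 - C a1 b3 b2 - C b1 b3 a2 - C b1 a3 b2
                 + C a1 b3 a2 + C a1 a3 b2 + C b1 a3 a2 - C a1 a3 a2"
    using assms[unfolded copula3_def, THEN conjunct2, THEN conjunct2, rule_format,
        of a1 b1 a3 b3 a2 b2]
    by linarith
qed (use assms in \<open>auto simp: copula3_def\<close>)

lemma copula3_swap_12: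
  assumes "copula3 C"
  shows "copula3 (\<lambda>u v w. C v u w)"
  unfolding copula3_def
proof (intro conjI allI impI ballI)
  fix a1 b1 a2 b2 a3 b3 :: real
  assume "a1 \<in> {0..1}" "b1 \<in> {0..1}" "a2 \<in> {0..1}" "b2 \<in> {0..1}" "a3 \<in> {0..1}" "b3 \<in> {0..1}"
    "a1 \<le> b1" "a2 \<le> b2" "a3 \<le> b3"
  then show "0 \<le> C b2 b1 b3 - C b2 a1 b3 - C a2 b1 b3 - C b2 b1 a3
                 + C a2 a1 b3 + C b2 a1 a3 + C a2 b1 a3 - C a2 a1 a3"
    using assms[unfolded copula3_def, THEN conjunct2, THEN conjunct2, rule_format,
        of a2 b2 a1 b1 a3 b3]
    by linarith
qed (use assms in \<open>auto simp: copula3_def\<close>)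

lemma copula3_section_increments:
  assumes "copula3 D" "x \<in> {0..1}" "z \<in> {0..1}" "s \<in> {0..1}" "t \<in> {0..1}" "s \<le> t"
  shows "0 \<le> D x t z - D x s z"
    and "D x t z - D x s z \<le> D x t 1 - D x s 1"
    and "D x t z - D x s z \<le> D 1 t z - D 1 s z"
    and "(D x t 1 - D x s 1) + (D 1 t z - D 1 s z) - (t - s) \<le> D x t z - D x s z"
proof -
  have box: "0 \<le> D b1 t b3 - D a1 t b3 - D b1 s b3 - D b1 t a3
                  + D a1 s b3 + D a1 t a3 + D b1 s a3 - D a1 s a3"
    if "a1 \<in> {0..1}" "b1 \<in> {0..1}" "a3 \<in> {0..1}" "b3 \<in> {0..1}" "a1 \<le> b1" "a3 \<le> b3"
    for a1 b1 a3 b3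
    using assms(1,4-6) that unfolding copula3_def by blast
  have grounded: "D 0 u v = 0" "D u 0 v = 0" "D u v 0 = 0" if "u \<in> {0..1}" "v \<in> {0..1}" for u v
    using assms(1) that unfolding copula3_def by auto
  have margin: "D 1 u 1 = u" if "u \<in> {0..1}" for u
    using assms(1) that unfolding copula3_def by auto
  show "0 \<le> D x t z - D x s z"
    using box[of 0 x 0 z] grounded assms(2-5) by auto
  show "D x t z - D x s z \<le> D x t 1 - D x s 1"
    using box[of 0 x z 1] grounded assms(2-5) by auto
  show "D x t z - D x s z \<le> D 1 t z - D 1 s z"
    using box[of x 1 0 z] grounded assms(2-5) by auto
  show "(D x t 1 - D x s 1) + (D 1 t z - D 1 s z) - (t - s) \<le> D x t z - D x s z"
    using box[of x 1 z 1] margin assms(2-5) by auto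
qed

definition middle_section :: "(real \<Rightarrow> real \<Rightarrow> real \<Rightarrow> real) \<Rightarrow> real \<Rightarrow> real \<Rightarrow> real \<Rightarrow> real" where
  "middle_section D x z s = D x (max 0 (min 1 s)) z"

lemma mono_nonexpansive_middle_section:
  assumes "copula3 D" "x \<in> {0..1}" "z \<in> {0..1}"
  shows "mono_nonexpansive (middle_section D x z)"
proof
  fix s t :: real assume "s \<le> t"
  define s' t' where "s' = max 0 (min 1 s)" and "t' = max 0 (min 1 t)"
  have st: "s' \<in> {0..1}" "t' \<in> {0..1}" "s' \<le> t'" "t' - s' \<le> t - s"
    using \<open>s \<le> t\<close> by (auto simp: s'_def t'_def)
  have margin: "D 1 u 1 = u" if "u \<in> {0..1}" for u
    using assms(1) that unfolding copula3_def by auto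
  show "middle_section D x z s \<le> middle_section D x z t"
    using copula3_section_increments(1)[OF assms st(1-3)] by (simp add: middle_section_def s'_def t'_def)
  have "D x t' z - D x s' z \<le> D 1 t' z - D 1 s' z"
    by (rule copula3_section_increments(3)[OF assms st(1-3)])
  also have "\<dots> \<le> D 1 t' 1 - D 1 s' 1"
    using copula3_section_increments(2)[OF assms(1) _ assms(3) st(1-3), of 1] by simp
  finally show "middle_section D x z t - middle_section D x z s \<le> t - s"
    using st margin by (simp add: middle_section_def s'_def t'_def)
qed

lemma middle_section_deriv_bounds:
  fixes D :: "real \<Rightarrow> real \<Rightarrow> real \<Rightarrow> real" and x z t :: real
  defines \<alpha>_def: "\<alpha> \<equiv> middle_section D x 1" and \<beta>_def: "\<beta> \<equiv> middle_section D 1 z"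
    and g_def: "g \<equiv> middle_section D x z"
  assumes D: "copula3 D" and x: "x \<in> {0..1}" and z: "z \<in> {0..1}" and t: "0 < t" "t < 1"
    and "\<alpha> differentiable (at t)" "\<beta> differentiable (at t)" "g differentiable (at t)"
  shows "W2 (deriv \<alpha> t) (deriv \<beta> t) \<le> deriv g t \<and> deriv g t \<le> M2 (deriv \<alpha> t) (deriv \<beta> t)"
proof (rule frechet_bounds_deriv)
  show "0 < 1 - t"
    using t by simp
  fix k :: real assume "0 < k" "k < 1 - t"
  then have "t \<in> {0..1}" "t + k \<in> {0..1}" "t \<le> t + k"
    "max 0 (min 1 t) = t" "max 0 (min 1 (t + k)) = t + k"
    using t by auto
  then show "0 \<le> g (t + k) - g t \<and> g (t + k) - g t \<le> \<alpha> (t + k) - \<alpha> t \<and>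
      g (t + k) - g t \<le> \<beta> (t + k) - \<beta> t \<and> (\<alpha> (t + k) - \<alpha> t) + (\<beta> (t + k) - \<beta> t) - k \<le> g (t + k) - g t"
    using copula3_section_increments[OF D x z, of t "t + k"]
    by (simp add: \<alpha>_def \<beta>_def g_def middle_section_def)
qed (use assms in \<open>auto simp: DERIV_deriv_iff_real_differentiable\<close>)

lemma copula3_star_bounds:
  assumes D: "copula3 D" and x: "x \<in> {0..1}" and y: "y \<in> {0..1}" and z: "z \<in> {0..1}"
    and A: "\<And>t. t \<in> {0..1} \<Longrightarrow> A x t = D x t 1"
    and B: "\<And>t. t \<in> {0..1} \<Longrightarrow> B t z = D 1 t z"
    and Cxz: "Cxz x z = D x 1 z"
  shows "max (star3 W2 A B x y z) (star3 M2 A B x y z + Cxz x z - ast2 M2 A B x z) \<le> D x y z"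
    and "D x y z \<le> min (star3 M2 A B x y z) (star3 W2 A B x y z + Cxz x z - ast2 W2 A B x z)"
proof -
  define \<alpha> \<beta> g where "\<alpha> = middle_section D x 1" and "\<beta> = middle_section D 1 z" and "g = middle_section D x z"
  have \<alpha>: "mono_nonexpansive \<alpha>" and \<beta>: "mono_nonexpansive \<beta>" and g: "mono_nonexpansive g"
    unfolding \<alpha>_def \<beta>_def g_def using x z by (auto intro!: mono_nonexpansive_middle_section[OF D])
  define N where "N = {t. \<not> \<alpha> differentiable (at t)} \<union> {t. \<not> \<beta> differentiable (at t)}
                       \<union> {t. \<not> g differentiable (at t)} \<union> {0, 1}"
  have "negligible N"
    using mono_nonexpansive.negligible_not_differentiable[OF \<alpha>]
      mono_nonexpansive.negligible_not_differentiable[OF \<beta>]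
      mono_nonexpansive.negligible_not_differentiable[OF g]
    by (simp add: N_def)
  have deriv_sections: "deriv (\<lambda>s. A x s) t = deriv \<alpha> t" "deriv (\<lambda>s. B s z) t = deriv \<beta> t"
    if "t \<in> {0<..<1}" for t
  proof -
    have "\<forall>\<^sub>F s in nhds t. s \<in> {0<..<1}"
      using that by (intro eventually_nhds_in_open) auto
    then show "deriv (\<lambda>s. A x s) t = deriv \<alpha> t" "deriv (\<lambda>s. B s z) t = deriv \<beta> t"
      by (auto intro!: deriv_cong_ev elim!: eventually_mono simp: A B \<alpha>_def \<beta>_def middle_section_def)
  qed
  have pointwise: "W2 (deriv \<alpha> t) (deriv \<beta> t) \<le> deriv g t \<and> deriv g t \<le> M2 (deriv \<alpha> t) (deriv \<beta> t)"
    if "t \<in> {0..1} - N" for t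
    using that unfolding \<alpha>_def \<beta>_def g_def
    by (intro middle_section_deriv_bounds[OF D x z]) (auto simp: N_def \<alpha>_def \<beta>_def g_def)
  define wW where "wW t = W2 (deriv \<alpha> t) (deriv \<beta> t)" for t
  define wM where "wM t = M2 (deriv \<alpha> t) (deriv \<beta> t)" for t
  have integrals: "star3 W2 A B x y z = integral {0..y} wW" "star3 M2 A B x y z = integral {0..y} wM"
    "ast2 W2 A B x z = integral {0..1} wW" "ast2 M2 A B x z = integral {0..1} wM"
    unfolding star3_def ast2_def wW_def wM_def using y
    by (auto intro!: integral_spike[OF \<open>negligible N\<close>] simp: deriv_sections N_def)
  have split: "integral {0..1} w = integral {0..y} w + integral {y..1} w"
    if "w integrable_on {0..1}" for w :: "real \<Rightarrow> real"
    using Henstock_Kurzweil_Integration.integral_combine[of 0 y 1 w] y that by simp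
  have "wW integrable_on {0..1}" "wM integrable_on {0..1}"
    using W2_deriv_absolutely_integrable[OF \<alpha> \<beta>] M2_deriv_absolutely_integrable[OF \<alpha> \<beta>]
    unfolding wW_def wM_def by (auto simp: set_lebesgue_integral_eq_integral(1))
  moreover have "integral {0..y} wW \<le> g y - g 0" "g y - g 0 \<le> integral {0..y} wM"
    "integral {y..1} wW \<le> g 1 - g y" "g 1 - g y \<le> integral {y..1} wM"
    unfolding wW_def wM_def using y pointwise
    by (auto intro!: integral_frechet_bounds_deriv[OF \<alpha> \<beta> g _ \<open>negligible N\<close>])
  moreover have "g y - g 0 = D x y z" "g 1 - g y = Cxz x z - D x y z"
    using D x y z Cxz unfolding g_def middle_section_def copula3_def by auto
  ultimately show "max (star3 W2 A B x y z) (star3 M2 A B x y z + Cxz x z - ast2 M2 A B x z) \<le> D x y z"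
    and "D x y z \<le> min (star3 M2 A B x y z) (star3 W2 A B x y z + Cxz x z - ast2 W2 A B x z)"
    unfolding integrals by (simp_all add: split)
qed

lemma Cpair_simps:
  "Cpair C12 C13 C23 1 2 = C12" "Cpair C12 C13 C23 1 3 = C13" "Cpair C12 C13 C23 2 3 = C23"
  "Cpair C12 C13 C23 2 1 = (\<lambda>u v. C12 v u)" "Cpair C12 C13 C23 3 1 = (\<lambda>u v. C13 v u)"
  "Cpair C12 C13 C23 3 2 = (\<lambda>u v. C23 v u)"
  by (simp_all add: Cpair_def)

lemma sel3_simps: "sel3 u1 u2 u3 1 = u1" "sel3 u1 u2 u3 2 = u2" "sel3 u1 u2 u3 3 = u3"
  by (simp_all add: sel3_def)

theorem theorem5p3:
  fixes C12 C13 C23 :: "real \<Rightarrow> real \<Rightarrow> real"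
    and Ct :: "real \<Rightarrow> real \<Rightarrow> real \<Rightarrow> real"
    and u1 u2 u3 :: real
  assumes "copula2 C12" and "copula2 C13" and "copula2 C23"
    and "compatible C12 C13 C23"
    and "copula3 Ct" and "has_marginals Ct C12 C13 C23"
    and "u1 \<in> {0..1}" and "u2 \<in> {0..1}" and "u3 \<in> {0..1}"
  shows "CL C12 C13 C23 u1 u2 u3 \<le> Ct u1 u2 u3 \<and> Ct u1 u2 u3 \<le> CU C12 C13 C23 u1 u2 u3"
proof -
  note Ct = \<open>copula3 Ct\<close> and u = \<open>u1 \<in> {0..1}\<close> \<open>u2 \<in> {0..1}\<close> \<open>u3 \<in> {0..1}\<close>
  have m12: "C12 a b = Ct a b 1" and m13: "C13 a b = Ct a 1 b" and m23: "C23 a b = Ct 1 a b"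
    if "a \<in> {0..1}" "b \<in> {0..1}" for a b
    using \<open>has_marginals Ct C12 C13 C23\<close> that by (auto simp: has_marginals_def)
  note K1 = copula3_star_bounds[OF Ct u(1,2,3), where A = C12 and B = C23 and Cxz = C13,
      OF m12[OF u(1)] m23[OF _ u(3)] m13[OF u(1,3)]]
  note K2 = copula3_star_bounds[OF copula3_swap_23[OF Ct] u(1,3,2),
      where A = C13 and B = "\<lambda>u v. C23 v u" and Cxz = C12,
      OF m13[OF u(1)] m23[OF u(2)] m12[OF u(1,2)]]
  note K3 = copula3_star_bounds[OF copula3_swap_12[OF Ct] u(2,1,3),
      where A = "\<lambda>u v. C12 v u" and B = C13 and Cxz = C23,
      OF m12[OF _ u(2)] m13[OF _ u(3)] m23[OF u(2,3)]]
  show ?thesis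
    unfolding CL_def CU_def Perms_def image_insert image_empty prod.case Let_def Cpair_simps sel3_simps
    using K1 K2 K3 by simp
qed

end
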